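(* Let $d\ge2$, $0<\gamma<1$, and let $D\subset\mathbb{R}^d$ be a $C^{1+\gamma}$ domain with defining function $\Phi$. If $\delta>0$ satisfies $$\delta^\gamma\frac{\|\nabla\Phi\|_\gamma}{|\nabla\Phi|_{\inf}}\le\frac12,$$ then for each $x\in\partial D$, the set $\partial D\cap B(x,\delta)$ is, after a rotation around $x$, the graph of a $C^{1+\gamma}$ function (of $d-1$ variables), and $D\cap B(x,\delta)$ is the part of $B(x,\delta)$ lying below this graph.
   Context: A defining function is $\Phi\in C^{1+\gamma}(\mathbb{R}^d)$ with $D=\{\Phi<0\}$, $\partial D=\{\Phi=0\}$ and $\nabla\Phi\ne0$ on $\partial D$. $|\nabla\Phi|_{\inf}=\inf_{x\in\partial D}|\nabla\Phi(x)|$ and $\|\nabla\Phi\|_\gamma=\sup_{x_1\ne x_2}|\nabla\Phi(x_1)-\nabla\Phi(x_2)|/|x_1-x_2|^\gamma$. *)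

theory Defs
  imports "HOL-Analysis.Analysis"
begin

definition holder_seminorm :: "('a::metric_space \<Rightarrow> 'b::real_normed_vector) \<Rightarrow> real \<Rightarrow> real" where
  "holder_seminorm G \<gamma> =
     (SUP p \<in> {(x1, x2). x1 \<noteq> x2}. norm (G (fst p) - G (snd p)) / (dist (fst p) (snd p) powr \<gamma>))"

definition holder_bounded :: "('a::metric_space \<Rightarrow> 'b::real_normed_vector) \<Rightarrow> real \<Rightarrow> bool" where
  "holder_bounded G \<gamma> \<longleftrightarrow>
     bdd_above ((\<lambda>p. norm (G (fst p) - G (snd p)) / (dist (fst p) (snd p) powr \<gamma>)) ` {(x1, x2). x1 \<noteq> x2})"

definition grad_inf :: "('a \<Rightarrow> 'b::real_normed_vector) \<Rightarrow> 'a set \<Rightarrow> real" where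
  "grad_inf G B = (INF x \<in> B. norm (G x))"

definition C1_holder_on :: "('a::real_inner \<Rightarrow> real) \<Rightarrow> real \<Rightarrow> 'a set \<Rightarrow> bool" where
  "C1_holder_on g \<gamma> U \<longleftrightarrow> open U \<and>
     (\<exists>Gg C. (\<forall>z\<in>U. (g has_derivative (\<lambda>h. Gg z \<bullet> h)) (at z)) \<and>
            (\<forall>z1\<in>U. \<forall>z2\<in>U. norm (Gg z1 - Gg z2) \<le> C * dist z1 z2 powr \<gamma>))"

end

theory Submission
  imports Defs
begin

text \<open>Rotate coordinates around \<open>x\<close> so that \<open>\<nabla>\<Phi>(x) = c e\<^sub>k\<close> with
  \<open>c = |\<nabla>\<Phi>(x)| \<ge> |\<nabla>\<Phi>|_inf\<close>. The smallness of \<open>\<delta>\<close> and the Hoelder bound give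
  \<open>|\<nabla>\<Phi>(y) - c e\<^sub>k| \<le> c/2\<close> on the ball, so \<open>\<partial>\<^sub>k\<Phi> \<ge> c/2\<close> and \<open>|\<nabla>\<Phi>| \<le> 3c/2\<close> there.
  Hence \<open>\<Phi>\<close> is strictly increasing on every vertical chord of the ball and vanishes at most once
  on it; this defines the height \<open>g\<close> of the boundary over the shadow \<open>U\<close> of \<open>\<partial>D \<inter> B(x,\<delta>)\<close>.
  The mean value theorem makes \<open>g\<close> Lipschitz with constant 3, differentiability of \<open>\<Phi>\<close> then
  yields \<open>\<nabla>g = -\<nabla>'\<Phi>/\<partial>\<^sub>k\<Phi>\<close> at the boundary point, and this quotient inherits the Hoelder
  continuity of \<open>\<nabla>\<Phi>\<close>.\<close>

definition proj_perp :: "'n \<Rightarrow> real^'n \<Rightarrow> real^'n" where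
  "proj_perp k z = z - (z $ k) *\<^sub>R axis k 1"

definition at_height :: "'n \<Rightarrow> real^'n \<Rightarrow> real \<Rightarrow> real^'n" where
  "at_height k z t = proj_perp k z + t *\<^sub>R axis k 1"

lemma proj_perp_nth: "proj_perp k z $ i = (if i = k then 0 else z $ i)"
  by (simp add: proj_perp_def axis_def)

lemma at_height_nth: "at_height k z t $ i = (if i = k then t else z $ i)"
  by (simp add: at_height_def proj_perp_nth axis_def)

lemma at_height_component [simp]: "at_height k z t $ k = t"
  by (simp add: at_height_nth)

lemma at_height_self [simp]: "at_height k z (z $ k) = z"
  by (simp add: vec_eq_iff at_height_nth)

lemma at_height_zero [simp]: "at_height k z 0 = proj_perp k z"
  by (simp add: at_height_def)

lemma proj_perp_at_height [simp]: "proj_perp k (at_height k z t) = proj_perp k z"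
  by (simp add: vec_eq_iff proj_perp_nth at_height_nth)

lemma at_height_cong:
  assumes "\<forall>i. i \<noteq> k \<longrightarrow> z $ i = w $ i"
  shows "at_height k z = at_height k w"
  using assms by (auto simp: fun_eq_iff vec_eq_iff at_height_nth)

lemma proj_perp_zero [simp]: "proj_perp k 0 = 0"
  by (simp add: proj_perp_def)

lemma proj_perp_diff: "proj_perp k (a - b) = proj_perp k a - proj_perp k b"
  by (simp add: proj_perp_def algebra_simps)

lemma at_height_diff:
  "at_height k z s - at_height k w t = proj_perp k (z - w) + (s - t) *\<^sub>R axis k 1"
  by (simp add: at_height_def proj_perp_diff algebra_simps)

lemma inner_proj_perp: "a \<bullet> proj_perp k h = proj_perp k a \<bullet> h"
  by (simp add: proj_perp_def inner_diff_right inner_diff_left inner_axis inner_axis')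

lemma norm_at_height_sq: "(norm (at_height k z t))\<^sup>2 = (norm (proj_perp k z))\<^sup>2 + t\<^sup>2"
proof -
  have "proj_perp k z \<bullet> axis k 1 = 0"
    by (simp add: inner_axis proj_perp_nth)
  then have "at_height k z t \<bullet> at_height k z t = proj_perp k z \<bullet> proj_perp k z + t\<^sup>2"
    by (simp add: at_height_def inner_add_left inner_add_right inner_axis' proj_perp_nth power2_eq_square)
  then show ?thesis
    by (simp only: power2_norm_eq_inner)
qed

lemma norm_at_height_mono:
  assumes "\<bar>s\<bar> \<le> \<bar>t\<bar>"
  shows "norm (at_height k z s) \<le> norm (at_height k z t)"
proof -
  have "s\<^sup>2 \<le> t\<^sup>2"
    using assms by (simp only: abs_le_square_iff)
  then have "(norm (at_height k z s))\<^sup>2 \<le> (norm (at_height k z t))\<^sup>2"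
    unfolding norm_at_height_sq by linarith
  then show ?thesis
    using power2_le_imp_le norm_ge_zero by blast
qed

lemma norm_proj_perp_le: "norm (proj_perp k z) \<le> norm z"
  using norm_at_height_mono[of 0 "z $ k" k z] by simp

lemma continuous_on_at_height [continuous_intros]:
  "continuous_on S f \<Longrightarrow> continuous_on S g \<Longrightarrow> continuous_on S (\<lambda>x. at_height k (f x) (g x))"
  unfolding at_height_def proj_perp_def by (intro continuous_intros)

lemma norm_divide_component_diff_le:
  fixes A1 A2 :: "real^'n"
  assumes "a > 0" "A1 $ k \<ge> a" "A2 $ k \<ge> a" "norm A2 \<le> b"
  shows "norm (A1 /\<^sub>R A1 $ k - A2 /\<^sub>R A2 $ k) \<le> (1 / a + b / a\<^sup>2) * norm (A1 - A2)"
proof -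
  define c1 c2 where "c1 = A1 $ k" and "c2 = A2 $ k"
  have c: "c1 \<ge> a" "c2 \<ge> a" "c1 > 0" "c2 > 0"
    using assms by (auto simp: c1_def c2_def)
  have "A1 /\<^sub>R c1 - A2 /\<^sub>R c2 = (A1 - A2) /\<^sub>R c1 + (1 / c1 - 1 / c2) *\<^sub>R A2"
    by (simp add: algebra_simps inverse_eq_divide)
  moreover have "norm ((A1 - A2) /\<^sub>R c1) = norm (A1 - A2) / c1"
    using c by (simp add: divide_inverse_commute)
  ultimately have "norm (A1 /\<^sub>R c1 - A2 /\<^sub>R c2) \<le> norm (A1 - A2) / c1 + \<bar>1 / c1 - 1 / c2\<bar> * norm A2"
    using norm_triangle_ineq[of "(A1 - A2) /\<^sub>R c1" "(1 / c1 - 1 / c2) *\<^sub>R A2"] by simp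
  also have "\<dots> \<le> norm (A1 - A2) / a + norm (A1 - A2) / a\<^sup>2 * b"
  proof (rule add_mono)
    show "norm (A1 - A2) / c1 \<le> norm (A1 - A2) / a"
      using c assms(1) by (intro divide_left_mono) auto
    have "\<bar>c2 - c1\<bar> \<le> norm (A1 - A2)"
      using component_le_norm_cart[of "A2 - A1" k] by (simp add: c1_def c2_def norm_minus_commute)
    moreover have "a\<^sup>2 \<le> c1 * c2"
      using c assms(1) by (simp add: power2_eq_square mult_mono)
    ultimately have "\<bar>c2 - c1\<bar> / (c1 * c2) \<le> norm (A1 - A2) / a\<^sup>2"
      using assms(1) by (intro frac_le) auto
    moreover have "\<bar>1 / c1 - 1 / c2\<bar> = \<bar>c2 - c1\<bar> / (c1 * c2)"
      using c by (simp add: field_simps abs_divide)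
    ultimately have "\<bar>1 / c1 - 1 / c2\<bar> \<le> norm (A1 - A2) / a\<^sup>2"
      by simp
    then show "\<bar>1 / c1 - 1 / c2\<bar> * norm A2 \<le> norm (A1 - A2) / a\<^sup>2 * b"
      by (rule mult_mono[OF _ assms(4)]) auto
  qed
  finally show ?thesis
    by (simp add: c1_def c2_def algebra_simps)
qed

locale flat_graph =
  fixes \<Psi> :: "real^'n \<Rightarrow> real" and G :: "real^'n \<Rightarrow> real^'n" and k :: 'n
    and \<delta> c H \<gamma> :: real
  assumes has_derivative: "\<And>z. (\<Psi> has_derivative (\<lambda>h. G z \<bullet> h)) (at z)"
    and c_pos: "c > 0" and H_nonneg: "H \<ge> 0" and \<gamma>_nonneg: "\<gamma> \<ge> 0" and \<gamma>_le_1: "\<gamma> \<le> 1"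
    and grad_near_axis: "\<And>z. z \<in> ball 0 \<delta> \<Longrightarrow> norm (G z - c *\<^sub>R axis k 1) \<le> c / 2"
    and grad_holder: "\<And>z1 z2. z1 \<in> ball 0 \<delta> \<Longrightarrow> z2 \<in> ball 0 \<delta> \<Longrightarrow>
                        norm (G z1 - G z2) \<le> H * dist z1 z2 powr \<gamma>"
begin

lemma grad_component_ge:
  assumes "z \<in> ball 0 \<delta>"
  shows "G z $ k \<ge> c / 2"
proof -
  have "\<bar>G z $ k - c\<bar> \<le> c / 2"
    using component_le_norm_cart[of "G z - c *\<^sub>R axis k 1" k] grad_near_axis[OF assms] by simp
  then show ?thesis
    by linarith
qed

lemma norm_grad_le:
  assumes "z \<in> ball 0 \<delta>"
  shows "norm (G z) \<le> 3 * (c / 2)"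
proof -
  have "norm (G z) \<le> norm (c *\<^sub>R axis k (1::real)) + norm (G z - c *\<^sub>R axis k 1)"
    by (rule norm_triangle_sub)
  moreover have "norm (c *\<^sub>R axis k (1::real)) = c"
    using c_pos by simp
  ultimately show ?thesis
    using grad_near_axis[OF assms] by linarith
qed

lemma continuous_on_compose_\<Psi> [continuous_intros]:
  assumes "continuous_on S f"
  shows "continuous_on S (\<lambda>x. \<Psi> (f x))"
proof -
  have "continuous_on UNIV \<Psi>"
    by (intro continuous_at_imp_continuous_on ballI has_derivative_continuous[OF has_derivative])
  then show ?thesis
    by (rule continuous_on_compose2[OF _ assms]) simp
qed

lemma has_real_derivative_along_line:
  "((\<lambda>\<tau>. \<Psi> (a + \<tau> *\<^sub>R v)) has_real_derivative (G (a + \<tau> *\<^sub>R v) \<bullet> v)) (at \<tau>)"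
proof -
  have "((\<lambda>\<tau>. a + \<tau> *\<^sub>R v) has_derivative (\<lambda>h. h *\<^sub>R v)) (at \<tau>)"
    by (auto intro!: derivative_eq_intros)
  from has_derivative_compose[OF this has_derivative]
  show ?thesis
    by (simp add: has_field_derivative_def mult_commute_abs)
qed

lemma strict_mono_along_axis:
  assumes "at_height k z s \<in> ball 0 \<delta>" "at_height k z t \<in> ball 0 \<delta>" "s < t"
  shows "\<Psi> (at_height k z s) < \<Psi> (at_height k z t)"
proof -
  obtain \<xi> where \<xi>: "s < \<xi>" "\<xi> < t"
    and mvt: "\<Psi> (at_height k z t) - \<Psi> (at_height k z s) = (t - s) * (G (at_height k z \<xi>) \<bullet> axis k 1)"
    using MVT2[OF \<open>s < t\<close>, of "\<lambda>\<tau>. \<Psi> (at_height k z \<tau>)" "\<lambda>\<tau>. G (at_height k z \<tau>) \<bullet> axis k 1"]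
      has_real_derivative_along_line
    unfolding at_height_def by blast
  have "\<bar>\<xi>\<bar> \<le> \<bar>s\<bar> \<or> \<bar>\<xi>\<bar> \<le> \<bar>t\<bar>"
    using \<xi> by linarith
  then have "at_height k z \<xi> \<in> ball 0 \<delta>"
    using assms norm_at_height_mono[of \<xi> s k z] norm_at_height_mono[of \<xi> t k z] by fastforce
  then have "G (at_height k z \<xi>) \<bullet> axis k 1 > 0"
    using grad_component_ge c_pos by (fastforce simp: inner_axis)
  then have "(t - s) * (G (at_height k z \<xi>) \<bullet> axis k 1) > 0"
    using \<open>s < t\<close> by simp
  then show ?thesis
    using mvt by linarith
qed

lemma level_set_lipschitz:
  assumes a: "a \<in> ball 0 \<delta>" and b: "b \<in> ball 0 \<delta>" and "\<Psi> a = \<Psi> b"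
  shows "\<bar>b $ k - a $ k\<bar> \<le> 3 * norm (proj_perp k (b - a))"
proof -
  define \<Delta> where "\<Delta> = (b - a) $ k"
  obtain \<xi> :: real where \<xi>: "0 < \<xi>" "\<xi> < 1"
    and mvt: "\<Psi> b - \<Psi> a = G (a + \<xi> *\<^sub>R (b - a)) \<bullet> (b - a)"
    using MVT2[of 0 1 "\<lambda>\<tau>. \<Psi> (a + \<tau> *\<^sub>R (b - a))"] has_real_derivative_along_line by force
  define A where "A = G (a + \<xi> *\<^sub>R (b - a))"
  have "a + \<xi> *\<^sub>R (b - a) \<in> closed_segment a b"
    using \<xi> by (auto simp: in_segment algebra_simps intro!: exI[of _ \<xi>])
  then have "a + \<xi> *\<^sub>R (b - a) \<in> ball 0 \<delta>"
    using closed_segment_subset[OF a b convex_ball] by blast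
  then have Ak: "A $ k \<ge> c / 2" and An: "norm A \<le> 3 * (c / 2)"
    using grad_component_ge norm_grad_le by (auto simp: A_def)
  have "0 = A \<bullet> at_height k (b - a) \<Delta>"
    unfolding \<Delta>_def at_height_self using mvt assms(3) by (simp add: A_def)
  also have "\<dots> = A \<bullet> proj_perp k (b - a) + \<Delta> * A $ k"
    by (simp add: at_height_def inner_add_right inner_axis)
  finally have "\<Delta> * A $ k = - (A \<bullet> proj_perp k (b - a))"
    by linarith
  moreover have "\<bar>\<Delta>\<bar> * A $ k = \<bar>\<Delta> * A $ k\<bar>"
    using Ak c_pos by (simp add: abs_mult)
  ultimately have \<Delta>_eq: "\<bar>\<Delta>\<bar> * A $ k = \<bar>A \<bullet> proj_perp k (b - a)\<bar>"
    by simp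
  have "\<bar>\<Delta>\<bar> * (c / 2) \<le> \<bar>\<Delta>\<bar> * A $ k"
    using Ak by (intro mult_left_mono) auto
  also have "\<dots> \<le> norm A * norm (proj_perp k (b - a))"
    using \<Delta>_eq Cauchy_Schwarz_ineq2 by simp
  also have "\<dots> \<le> 3 * (c / 2) * norm (proj_perp k (b - a))"
    using An by (intro mult_right_mono) auto
  finally have "\<bar>\<Delta>\<bar> * (c / 2) \<le> (3 * norm (proj_perp k (b - a))) * (c / 2)"
    by (simp add: mult_ac)
  then show ?thesis
    using c_pos by (simp add: \<Delta>_def)
qed

lemma zero_along_axis:
  assumes "s \<le> t" "\<Psi> (at_height k z s) * \<Psi> (at_height k z t) \<le> 0"
  obtains \<tau> where "s \<le> \<tau>" "\<tau> \<le> t" "\<Psi> (at_height k z \<tau>) = 0"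
proof -
  have cont: "continuous_on {s..t} (\<lambda>\<tau>. \<Psi> (at_height k z \<tau>))"
    by (intro continuous_intros)
  from assms(2) consider "\<Psi> (at_height k z s) \<le> 0" "0 \<le> \<Psi> (at_height k z t)"
    | "0 \<le> \<Psi> (at_height k z s)" "\<Psi> (at_height k z t) \<le> 0"
    by (auto simp: mult_le_0_iff)
  then show ?thesis
    by cases (use IVT'[OF _ _ assms(1) cont] IVT2'[OF _ _ assms(1) cont] that in blast)+
qed

definition shadow :: "(real^'n) set" where
  "shadow = {z. \<exists>t. at_height k z t \<in> ball 0 \<delta> \<and> \<Psi> (at_height k z t) = 0}"

text \<open>Off the shadow the height is put at \<open>\<plusminus>\<delta>\<close>, on the side of the ball where \<open>\<Psi>\<close> has the
  sign it has on the whole vertical chord.\<close>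
definition boundary_height :: "real^'n \<Rightarrow> real" where
  "boundary_height z =
     (if z \<in> shadow then THE t. at_height k z t \<in> ball 0 \<delta> \<and> \<Psi> (at_height k z t) = 0
      else if \<Psi> (at_height k z 0) < 0 then \<delta> else - \<delta>)"

lemma zero_along_axis_unique:
  assumes s: "at_height k z s \<in> ball 0 \<delta>" "\<Psi> (at_height k z s) = 0"
    and t: "at_height k z t \<in> ball 0 \<delta>" "\<Psi> (at_height k z t) = 0"
  shows "s = t"
proof (rule ccontr)
  assume "s \<noteq> t"
  then consider "s < t" | "t < s"
    by linarith
  then show False
  proof cases
    case 1
    with strict_mono_along_axis[OF s(1) t(1)] s(2) t(2) show False by simp
  next
    case 2
    with strict_mono_along_axis[OF t(1) s(1)] s(2) t(2) show False by simp
  qed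
qed

lemma boundary_height_eqI:
  assumes "at_height k z t \<in> ball 0 \<delta>" "\<Psi> (at_height k z t) = 0"
  shows "z \<in> shadow" "boundary_height z = t"
proof -
  show "z \<in> shadow"
    using assms unfolding shadow_def by blast
  have "(THE t'. at_height k z t' \<in> ball 0 \<delta> \<and> \<Psi> (at_height k z t') = 0) = t"
  proof (rule the_equality)
    fix t' assume "at_height k z t' \<in> ball 0 \<delta> \<and> \<Psi> (at_height k z t') = 0"
    then show "t' = t"
      using zero_along_axis_unique assms by blast
  qed (use assms in blast)
  with \<open>z \<in> shadow\<close> show "boundary_height z = t"
    by (simp add: boundary_height_def)
qed

lemma boundary_point:
  assumes "z \<in> shadow"
  shows "at_height k z (boundary_height z) \<in> ball 0 \<delta>" "\<Psi> (at_height k z (boundary_height z)) = 0"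
proof -
  obtain t where t: "at_height k z t \<in> ball 0 \<delta>" "\<Psi> (at_height k z t) = 0"
    using assms unfolding shadow_def by blast
  with boundary_height_eqI(2)[OF t] show "at_height k z (boundary_height z) \<in> ball 0 \<delta>"
    "\<Psi> (at_height k z (boundary_height z)) = 0" by simp_all
qed

lemma zero_iff_on_graph:
  assumes "z \<in> ball 0 \<delta>"
  shows "\<Psi> z = 0 \<longleftrightarrow> z \<in> shadow \<and> z $ k = boundary_height z"
proof
  assume "\<Psi> z = 0"
  then show "z \<in> shadow \<and> z $ k = boundary_height z"
    using boundary_height_eqI[of z "z $ k"] assms by simp
next
  assume "z \<in> shadow \<and> z $ k = boundary_height z"
  then show "\<Psi> z = 0"
    using boundary_point(2)[of z] by (metis at_height_self)
qed

lemma sign_constant_off_shadow: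
  assumes "z \<in> ball 0 \<delta>" "z \<notin> shadow"
  shows "\<Psi> (at_height k z 0) * \<Psi> z > 0"
proof (rule ccontr)
  assume "\<not> ?thesis"
  then have "\<Psi> (at_height k z (min 0 (z $ k))) * \<Psi> (at_height k z (max 0 (z $ k))) \<le> 0"
    by (cases "0 \<le> z $ k") (simp_all add: min_def max_def mult.commute)
  then obtain \<tau> where \<tau>: "min 0 (z $ k) \<le> \<tau>" "\<tau> \<le> max 0 (z $ k)" "\<Psi> (at_height k z \<tau>) = 0"
    using zero_along_axis[of "min 0 (z $ k)" "max 0 (z $ k)" z] by force
  then have "norm (at_height k z \<tau>) \<le> norm z"
    using norm_at_height_mono[of \<tau> "z $ k" k z] by simp
  then have "at_height k z \<tau> \<in> ball 0 \<delta>"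
    using assms(1) by simp
  then show False
    using boundary_height_eqI(1)[of z \<tau>] \<tau>(3) assms(2) by blast
qed

lemma neg_iff_below_graph:
  assumes z: "z \<in> ball 0 \<delta>"
  shows "\<Psi> z < 0 \<longleftrightarrow> z $ k < boundary_height z"
proof (cases "z \<in> shadow")
  case True
  note w = boundary_point[OF True]
  consider "z $ k < boundary_height z" | "z $ k = boundary_height z" | "boundary_height z < z $ k"
    by linarith
  then show ?thesis
  proof cases
    case 1
    then show ?thesis
      using strict_mono_along_axis[of z "z $ k" "boundary_height z"] z w by simp
  next
    case 2
    then show ?thesis
      using w(2) by (metis at_height_self less_irrefl)
  next
    case 3
    then show ?thesis
      using strict_mono_along_axis[of z "boundary_height z" "z $ k"] z w by simp
  qed
next
  case False
  then have "boundary_height z = (if \<Psi> (at_height k z 0) < 0 then \<delta> else - \<delta>)"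
    by (simp add: boundary_height_def)
  moreover have "\<bar>z $ k\<bar> < \<delta>"
    using component_le_norm_cart[of z k] z by simp
  ultimately show ?thesis
    using sign_constant_off_shadow[OF z False] by (auto simp: zero_less_mult_iff)
qed

lemma boundary_height_cylindrical:
  assumes "\<forall>i. i \<noteq> k \<longrightarrow> z $ i = w $ i"
  shows "boundary_height z = boundary_height w \<and> (z \<in> shadow \<longleftrightarrow> w \<in> shadow)"
proof -
  have eq: "at_height k z = at_height k w"
    by (rule at_height_cong[OF assms])
  then have "z \<in> shadow \<longleftrightarrow> w \<in> shadow"
    by (simp add: shadow_def)
  with eq show ?thesis
    by (simp add: boundary_height_def)
qed

lemma open_shadow: "open shadow"
  unfolding open_subopen[of shadow]
proof
  fix z assume "z \<in> shadow"
  define t where "t = boundary_height z"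
  note w = boundary_point[OF \<open>z \<in> shadow\<close>, folded t_def]
  obtain r where r: "r > 0" "ball (at_height k z t) r \<subseteq> ball 0 \<delta>"
    using w(1) open_contains_ball[of "ball 0 \<delta>"] by blast
  define \<epsilon> where "\<epsilon> = r / 2"
  have near: "at_height k z (t + s) \<in> ball 0 \<delta>" if "\<bar>s\<bar> < r" for s
  proof -
    have "dist (at_height k z t) (at_height k z (t + s)) = \<bar>s\<bar>"
      by (simp add: dist_norm at_height_diff)
    then have "at_height k z (t + s) \<in> ball (at_height k z t) r"
      using that by simp
    then show ?thesis
      using r(2) by blast
  qed
  have ends: "at_height k z (t - \<epsilon>) \<in> ball 0 \<delta>" "at_height k z (t + \<epsilon>) \<in> ball 0 \<delta>"
    using near[of "- \<epsilon>"] near[of \<epsilon>] r by (simp_all add: \<epsilon>_def)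
  define T where "T = {y. norm (at_height k y (t - \<epsilon>)) < \<delta> \<and> norm (at_height k y (t + \<epsilon>)) < \<delta> \<and>
                          \<Psi> (at_height k y (t - \<epsilon>)) < 0 \<and> 0 < \<Psi> (at_height k y (t + \<epsilon>))}"
  have "open T"
    unfolding T_def by (intro open_Collect_conj open_Collect_less continuous_intros)
  moreover have "z \<in> T"
    using ends w r strict_mono_along_axis[of z "t - \<epsilon>" t] strict_mono_along_axis[of z t "t + \<epsilon>"]
    by (simp add: T_def \<epsilon>_def)
  moreover have "T \<subseteq> shadow"
  proof
    fix y assume y: "y \<in> T"
    then obtain \<tau> where \<tau>: "t - \<epsilon> \<le> \<tau>" "\<tau> \<le> t + \<epsilon>" "\<Psi> (at_height k y \<tau>) = 0"
      using zero_along_axis[of "t - \<epsilon>" "t + \<epsilon>" y] r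
      by (force simp: T_def \<epsilon>_def mult_le_0_iff)
    have "\<bar>\<tau>\<bar> \<le> \<bar>t - \<epsilon>\<bar> \<or> \<bar>\<tau>\<bar> \<le> \<bar>t + \<epsilon>\<bar>"
      using \<tau> by linarith
    then have "at_height k y \<tau> \<in> ball 0 \<delta>"
      using y norm_at_height_mono[of \<tau> "t - \<epsilon>" k y] norm_at_height_mono[of \<tau> "t + \<epsilon>" k y]
      by (fastforce simp: T_def)
    then show "y \<in> shadow"
      using boundary_height_eqI(1) \<tau>(3) by blast
  qed
  ultimately show "\<exists>T. open T \<and> z \<in> T \<and> T \<subseteq> shadow"
    by blast
qed

lemma boundary_point_dist_le:
  assumes "z1 \<in> shadow" "z2 \<in> shadow"
  shows "dist (at_height k z1 (boundary_height z1)) (at_height k z2 (boundary_height z2)) \<le> 4 * dist z1 z2"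
proof -
  define w1 w2 where "w1 = at_height k z1 (boundary_height z1)" and "w2 = at_height k z2 (boundary_height z2)"
  have "w1 \<in> ball 0 \<delta>" "w2 \<in> ball 0 \<delta>" "\<Psi> w2 = \<Psi> w1"
    using boundary_point[OF assms(1)] boundary_point[OF assms(2)] by (simp_all add: w1_def w2_def)
  from level_set_lipschitz[OF this(2,1,3)]
  have "\<bar>boundary_height z1 - boundary_height z2\<bar> \<le> 3 * norm (proj_perp k (z1 - z2))"
    by (simp add: w1_def w2_def proj_perp_diff)
  moreover have "norm (w1 - w2) \<le> norm (proj_perp k (z1 - z2)) + \<bar>boundary_height z1 - boundary_height z2\<bar>"
    using norm_triangle_ineq[of "proj_perp k (z1 - z2)"
        "(boundary_height z1 - boundary_height z2) *\<^sub>R axis k (1::real)"]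
    by (simp add: w1_def w2_def at_height_diff)
  ultimately show ?thesis
    using norm_proj_perp_le[of k "z1 - z2"] by (simp add: w1_def w2_def dist_norm)
qed

text \<open>The implicit-function formula \<open>\<nabla>g = - \<nabla>'\<Psi> / \<partial>\<^sub>k\<Psi>\<close>, evaluated at the boundary point above \<open>z\<close>.\<close>
definition boundary_height_grad :: "real^'n \<Rightarrow> real^'n" where
  "boundary_height_grad z =
     (let A = G (at_height k z (boundary_height z)) in - proj_perp k (A /\<^sub>R A $ k))"

lemma boundary_height_linearization:
  assumes "z \<in> shadow" "z0 \<in> shadow"
  defines "A \<equiv> G (at_height k z0 (boundary_height z0))"
  shows "boundary_height z - boundary_height z0 - boundary_height_grad z0 \<bullet> (z - z0) =
           A \<bullet> (at_height k z (boundary_height z) - at_height k z0 (boundary_height z0)) / A $ k"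
proof -
  have "A $ k > 0"
    using grad_component_ge[OF boundary_point(1)[OF assms(2)]] c_pos by (simp add: A_def)
  moreover have "boundary_height_grad z0 \<bullet> (z - z0) = - (A \<bullet> proj_perp k (z - z0)) / A $ k"
    by (simp add: boundary_height_grad_def A_def Let_def inner_proj_perp[symmetric] divide_inverse_commute)
  ultimately show ?thesis
    by (simp add: at_height_diff inner_add_right inner_diff_right inner_axis field_simps)
qed

lemma has_derivative_boundary_height:
  assumes z0: "z0 \<in> shadow"
  shows "(boundary_height has_derivative (\<lambda>h. boundary_height_grad z0 \<bullet> h)) (at z0)"
  unfolding has_derivative_at_alt
proof (intro conjI allI impI bounded_linear_inner_right)
  fix \<epsilon> :: real assume "\<epsilon> > 0"
  define w where "w z = at_height k z (boundary_height z)" for z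
  define A where "A = G (w z0)"
  have w0: "w z0 \<in> ball 0 \<delta>" "\<Psi> (w z0) = 0"
    using boundary_point[OF z0] by (simp_all add: w_def)
  have Ak: "A $ k \<ge> c / 2"
    using grad_component_ge[OF w0(1)] by (simp add: A_def)
  have "\<epsilon> * c / 8 > 0"
    using \<open>\<epsilon> > 0\<close> c_pos by simp
  then obtain d1 where "d1 > 0" and d1: "\<And>y. norm (y - w z0) < d1 \<Longrightarrow>
      norm (\<Psi> y - \<Psi> (w z0) - A \<bullet> (y - w z0)) \<le> (\<epsilon> * c / 8) * norm (y - w z0)"
    using has_derivative[of "w z0", unfolded has_derivative_at_alt] unfolding A_def by blast
  obtain d2 where "d2 > 0" and d2: "ball z0 d2 \<subseteq> shadow"
    using open_shadow z0 open_contains_ball by blast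
  show "\<exists>d>0. \<forall>z. norm (z - z0) < d \<longrightarrow>
      norm (boundary_height z - boundary_height z0 - boundary_height_grad z0 \<bullet> (z - z0)) \<le> \<epsilon> * norm (z - z0)"
  proof (intro exI[of _ "min (d1 / 4) d2"] conjI allI impI)
    fix z assume "norm (z - z0) < min (d1 / 4) d2"
    then have z: "z \<in> shadow" "norm (z - z0) < d1 / 4"
      using d2 by (auto simp: dist_norm norm_minus_commute)
    have ww: "norm (w z - w z0) \<le> 4 * norm (z - z0)"
      using boundary_point_dist_le[OF z(1) z0] by (simp add: w_def dist_norm)
    have "\<bar>A \<bullet> (w z - w z0)\<bar> \<le> (\<epsilon> * c / 8) * norm (w z - w z0)"
      using d1[of "w z"] ww z(2) w0(2) boundary_point(2)[OF z(1)] by (simp add: w_def)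
    also have "\<dots> \<le> (\<epsilon> * c / 8) * (4 * norm (z - z0))"
      using ww \<open>\<epsilon> > 0\<close> c_pos by (intro mult_left_mono) auto
    also have "\<dots> = \<epsilon> * (c / 2 * norm (z - z0))"
      by simp
    also have "\<dots> \<le> \<epsilon> * (A $ k * norm (z - z0))"
      using Ak \<open>\<epsilon> > 0\<close> by (intro mult_left_mono mult_right_mono) auto
    finally show "norm (boundary_height z - boundary_height z0 - boundary_height_grad z0 \<bullet> (z - z0))
        \<le> \<epsilon> * norm (z - z0)"
      using boundary_height_linearization[OF z(1) z0] Ak c_pos
      by (simp add: w_def A_def abs_divide pos_divide_le_eq mult_ac)
  qed (use \<open>d1 > 0\<close> \<open>d2 > 0\<close> in auto)
qed

lemma boundary_height_grad_holder:
  assumes "z1 \<in> shadow" "z2 \<in> shadow"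
  shows "norm (boundary_height_grad z1 - boundary_height_grad z2) \<le> (32 * H / c) * dist z1 z2 powr \<gamma>"
proof -
  define w1 w2 where "w1 = at_height k z1 (boundary_height z1)" and "w2 = at_height k z2 (boundary_height z2)"
  have w: "w1 \<in> ball 0 \<delta>" "w2 \<in> ball 0 \<delta>"
    using boundary_point assms by (simp_all add: w1_def w2_def)
  have "dist w1 w2 powr \<gamma> \<le> (4 * dist z1 z2) powr \<gamma>"
    using boundary_point_dist_le[OF assms] \<gamma>_nonneg by (intro powr_mono2) (auto simp: w1_def w2_def)
  also have "\<dots> = 4 powr \<gamma> * dist z1 z2 powr \<gamma>"
    by (simp add: powr_mult)
  also have "\<dots> \<le> 4 * dist z1 z2 powr \<gamma>"
    using powr_mono[of \<gamma> 1 "4::real"] \<gamma>_le_1 by (intro mult_right_mono) auto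
  finally have "H * dist w1 w2 powr \<gamma> \<le> H * (4 * dist z1 z2 powr \<gamma>)"
    using H_nonneg by (rule mult_left_mono)
  then have GG: "norm (G w1 - G w2) \<le> H * (4 * dist z1 z2 powr \<gamma>)"
    using grad_holder[OF w] by linarith
  have "boundary_height_grad z1 - boundary_height_grad z2 =
          proj_perp k (G w2 /\<^sub>R G w2 $ k - G w1 /\<^sub>R G w1 $ k)"
    by (simp add: boundary_height_grad_def w1_def w2_def Let_def proj_perp_diff)
  then have "norm (boundary_height_grad z1 - boundary_height_grad z2) \<le>
               norm (G w2 /\<^sub>R G w2 $ k - G w1 /\<^sub>R G w1 $ k)"
    by (simp only: norm_proj_perp_le)
  also have "\<dots> = norm (G w1 /\<^sub>R G w1 $ k - G w2 /\<^sub>R G w2 $ k)"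
    by (rule norm_minus_commute)
  also have "\<dots> \<le> (1 / (c / 2) + 3 * (c / 2) / (c / 2)\<^sup>2) * norm (G w1 - G w2)"
    using c_pos w grad_component_ge norm_grad_le by (intro norm_divide_component_diff_le) auto
  also have "1 / (c / 2) + 3 * (c / 2) / (c / 2)\<^sup>2 = 8 / c"
    using c_pos by (simp add: power2_eq_square)
  also have "8 / c * norm (G w1 - G w2) \<le> 8 / c * (H * (4 * dist z1 z2 powr \<gamma>))"
    using GG c_pos by (intro mult_left_mono) auto
  also have "\<dots> = (32 * H / c) * dist z1 z2 powr \<gamma>"
    by simp
  finally show ?thesis .
qed

lemma graph_representation:
  "\<exists>g U. (\<forall>z w. (\<forall>i. i \<noteq> k \<longrightarrow> z $ i = w $ i) \<longrightarrow> g z = g w \<and> (z \<in> U \<longleftrightarrow> w \<in> U)) \<and>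
     C1_holder_on g \<gamma> U \<and>
     (\<forall>z\<in>ball 0 \<delta>. \<Psi> z = 0 \<longleftrightarrow> z \<in> U \<and> z $ k = g z) \<and>
     (\<forall>z\<in>ball 0 \<delta>. \<Psi> z < 0 \<longleftrightarrow> z $ k < g z)"
proof (intro exI conjI)
  show "C1_holder_on boundary_height \<gamma> shadow"
    unfolding C1_holder_on_def
    using open_shadow has_derivative_boundary_height boundary_height_grad_holder by blast
qed (use boundary_height_cylindrical zero_iff_on_graph neg_iff_below_graph in blast)+

end

lemma holder_seminorm_bound:
  assumes "holder_bounded G \<gamma>"
  shows "norm (G x - G y) \<le> holder_seminorm G \<gamma> * dist x y powr \<gamma>"
proof (cases "x = y")
  case False
  have "norm (G x - G y) / dist x y powr \<gamma> \<le> holder_seminorm G \<gamma>"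
    unfolding holder_seminorm_def
    using assms False by (intro cSUP_upper2[of _ _ "(x, y)"]) (auto simp: holder_bounded_def)
  then show ?thesis
    using False by (simp add: pos_divide_le_eq)
qed simp

lemma holder_seminorm_nonneg:
  fixes G :: "'a::metric_space \<Rightarrow> 'b::real_normed_vector" and x y :: 'a
  assumes "holder_bounded G \<gamma>" "x \<noteq> y"
  shows "holder_seminorm G \<gamma> \<ge> 0"
proof -
  have "0 \<le> holder_seminorm G \<gamma> * dist x y powr \<gamma>"
    using holder_seminorm_bound[OF assms(1), where x = x and y = y] norm_ge_zero order_trans by blast
  then show ?thesis
    using assms(2) by (simp add: zero_le_mult_iff)
qed

lemma flat_graph_rotated:
  fixes \<Phi> :: "real^'n \<Rightarrow> real" and gradPhi R :: "real^'n \<Rightarrow> real^'n"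
  assumes deriv: "\<And>y. (\<Phi> has_derivative (\<lambda>h. gradPhi y \<bullet> h)) (at y)"
    and holder: "\<And>y1 y2. norm (gradPhi y1 - gradPhi y2) \<le> H * dist y1 y2 powr \<gamma>"
    and R: "orthogonal_transformation R" "R (gradPhi x) = c *\<^sub>R axis k 1"
    and "c > 0" "H \<ge> 0" "\<gamma> \<ge> 0" "\<gamma> \<le> 1"
    and small: "H * \<delta> powr \<gamma> \<le> c / 2"
  shows "flat_graph (\<lambda>z. \<Phi> (x + inv R z)) (\<lambda>z. R (gradPhi (x + inv R z))) k \<delta> c H \<gamma>"
proof
  have Q: "linear (inv R)" "\<And>v. norm (inv R v) = norm v"
    using orthogonal_transformation_inv[OF R(1)]
    by (auto simp: orthogonal_transformation_linear orthogonal_transformation_norm)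
  have RQ: "R (inv R v) = v" for v
    using orthogonal_transformation_surj[OF R(1)] by (simp add: surj_f_inv_f)
  have R_inner: "R u \<bullet> R v = u \<bullet> v" for u v
    using R(1) by (simp add: orthogonal_transformation_def)
  have R_diff: "norm (R u - R v) = norm (u - v)" for u v
    using R(1) by (simp add: orthogonal_transformation_norm linear_diff[symmetric] orthogonal_transformation_linear)
  have dist_Q: "dist (inv R z1) (inv R z2) = dist z1 z2" for z1 z2
    using Q by (simp add: dist_norm linear_diff[symmetric])
  fix z
  have "((\<lambda>z. x + inv R z) has_derivative inv R) (at z)"
    using Q(1) by (auto intro!: derivative_eq_intros linear_imp_has_derivative)
  from has_derivative_compose[OF this deriv]
  have "((\<lambda>z. \<Phi> (x + inv R z)) has_derivative (\<lambda>h. gradPhi (x + inv R z) \<bullet> inv R h)) (at z)" .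
  moreover have "gradPhi y \<bullet> inv R h = R (gradPhi y) \<bullet> h" for y h
    using R_inner[of "gradPhi y" "inv R h"] by (simp add: RQ)
  ultimately show "((\<lambda>z. \<Phi> (x + inv R z)) has_derivative (\<lambda>h. R (gradPhi (x + inv R z)) \<bullet> h)) (at z)"
    by simp
  show "norm (R (gradPhi (x + inv R z)) - c *\<^sub>R axis k 1) \<le> c / 2" if "z \<in> ball 0 \<delta>"
  proof -
    have "dist (x + inv R z) x powr \<gamma> \<le> \<delta> powr \<gamma>"
      using that Q(2) \<open>\<gamma> \<ge> 0\<close> by (intro powr_mono2) (auto simp: dist_norm)
    then have "H * dist (x + inv R z) x powr \<gamma> \<le> H * \<delta> powr \<gamma>"
      using \<open>H \<ge> 0\<close> by (rule mult_left_mono)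
    moreover have "norm (R (gradPhi (x + inv R z)) - c *\<^sub>R axis k 1) = norm (gradPhi (x + inv R z) - gradPhi x)"
      using R_diff R(2) by metis
    ultimately show ?thesis
      using holder[of "x + inv R z" x] small by linarith
  qed
  fix z1 z2
  show "norm (R (gradPhi (x + inv R z1)) - R (gradPhi (x + inv R z2))) \<le> H * dist z1 z2 powr \<gamma>"
    using holder[of "x + inv R z1" "x + inv R z2"] by (simp add: R_diff dist_Q)
qed (use \<open>c > 0\<close> \<open>H \<ge> 0\<close> \<open>\<gamma> \<ge> 0\<close> \<open>\<gamma> \<le> 1\<close> in auto)

lemma graph_near_point:
  fixes \<Phi> :: "real^'n \<Rightarrow> real" and gradPhi R :: "real^'n \<Rightarrow> real^'n"
  assumes deriv: "\<And>y. (\<Phi> has_derivative (\<lambda>h. gradPhi y \<bullet> h)) (at y)"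
    and holder: "\<And>y1 y2. norm (gradPhi y1 - gradPhi y2) \<le> H * dist y1 y2 powr \<gamma>"
    and R: "orthogonal_transformation R" "R (gradPhi x) = c *\<^sub>R axis k 1"
    and "c > 0" "H \<ge> 0" "\<gamma> \<ge> 0" "\<gamma> \<le> 1"
    and small: "H * \<delta> powr \<gamma> \<le> c / 2"
  shows "\<exists>g U. (\<forall>z w. (\<forall>i. i \<noteq> k \<longrightarrow> z $ i = w $ i) \<longrightarrow> g z = g w \<and> (z \<in> U \<longleftrightarrow> w \<in> U)) \<and>
           C1_holder_on g \<gamma> U \<and>
           (\<forall>y\<in>ball x \<delta>. \<Phi> y = 0 \<longleftrightarrow> R (y - x) \<in> U \<and> R (y - x) $ k = g (R (y - x))) \<and>
           (\<forall>y\<in>ball x \<delta>. \<Phi> y < 0 \<longleftrightarrow> R (y - x) $ k < g (R (y - x)))"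
proof -
  interpret flat_graph "\<lambda>z. \<Phi> (x + inv R z)" "\<lambda>z. R (gradPhi (x + inv R z))" k \<delta> c H \<gamma>
    by (rule flat_graph_rotated) fact+
  obtain g U where g: "\<forall>z w. (\<forall>i. i \<noteq> k \<longrightarrow> z $ i = w $ i) \<longrightarrow> g z = g w \<and> (z \<in> U \<longleftrightarrow> w \<in> U)"
      "C1_holder_on g \<gamma> U"
      "\<forall>z\<in>ball 0 \<delta>. \<Phi> (x + inv R z) = 0 \<longleftrightarrow> z \<in> U \<and> z $ k = g z"
      "\<forall>z\<in>ball 0 \<delta>. \<Phi> (x + inv R z) < 0 \<longleftrightarrow> z $ k < g z"
    using graph_representation by blast
  have rotate: "R (y - x) \<in> ball 0 \<delta>" "\<Phi> (x + inv R (R (y - x))) = \<Phi> y" if "y \<in> ball x \<delta>" for y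
    using that orthogonal_transformation_norm[OF R(1)] inv_f_f[OF orthogonal_transformation_inj[OF R(1)]]
    by (auto simp: dist_norm norm_minus_commute)
  show ?thesis
  proof (intro exI conjI ballI)
    fix y assume y: "y \<in> ball x \<delta>"
    have "\<Phi> (x + inv R (R (y - x))) = 0 \<longleftrightarrow> R (y - x) \<in> U \<and> R (y - x) $ k = g (R (y - x))"
      using g(3) rotate(1)[OF y] by blast
    then show "\<Phi> y = 0 \<longleftrightarrow> R (y - x) \<in> U \<and> R (y - x) $ k = g (R (y - x))"
      using rotate(2)[OF y] by simp
    have "\<Phi> (x + inv R (R (y - x))) < 0 \<longleftrightarrow> R (y - x) $ k < g (R (y - x))"
      using g(4) rotate(1)[OF y] by blast
    then show "\<Phi> y < 0 \<longleftrightarrow> R (y - x) $ k < g (R (y - x))"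
      using rotate(2)[OF y] by simp
  qed (use g in auto)
qed

theorem lemma6p4:
  fixes \<Phi> :: "real ^ 'n \<Rightarrow> real" and gradPhi :: "real ^ 'n \<Rightarrow> real ^ 'n"
    and D :: "(real ^ 'n) set" and \<gamma> \<delta> :: real
  assumes dim: "CARD('n) \<ge> 2"
    and gam: "0 < \<gamma>" "\<gamma> < 1"
    and deriv: "\<And>x. (\<Phi> has_derivative (\<lambda>h. gradPhi x \<bullet> h)) (at x)"
    and hold: "holder_bounded gradPhi \<gamma>"
    and D_def: "D = {x. \<Phi> x < 0}"
    and bdry: "frontier D = {x. \<Phi> x = 0}"
    and nondeg: "\<And>x. x \<in> frontier D \<Longrightarrow> gradPhi x \<noteq> 0"
    and dom: "connected D"
    and dpos: "\<delta> > 0"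
    and small: "\<delta> powr \<gamma> * holder_seminorm gradPhi \<gamma> \<le> grad_inf gradPhi (frontier D) / 2"
    and xb: "x \<in> frontier D"
  shows "\<exists>R :: real ^ 'n \<Rightarrow> real ^ 'n. \<exists>k :: 'n. \<exists>g :: real ^ 'n \<Rightarrow> real. \<exists>U.
           orthogonal_transformation R \<and> det (matrix R) = 1 \<and>
           (\<forall>z w. (\<forall>i. i \<noteq> k \<longrightarrow> z $ i = w $ i) \<longrightarrow> g z = g w \<and> (z \<in> U \<longleftrightarrow> w \<in> U)) \<and>
           C1_holder_on g \<gamma> U \<and>
           (\<forall>y \<in> ball x \<delta>. y \<in> frontier D \<longleftrightarrow>
                 (R (y - x) \<in> U \<and> R (y - x) $ k = g (R (y - x)))) \<and>
           (\<forall>y \<in> ball x \<delta>. y \<in> D \<longleftrightarrow> R (y - x) $ k < g (R (y - x)))"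
proof -
  fix k :: 'n \<comment> \<open>any axis will do\<close>
  define c where "c = norm (gradPhi x)"
  define H where "H = holder_seminorm gradPhi \<gamma>"
  have "c > 0"
    using nondeg[OF xb] by (simp add: c_def)
  have "H \<ge> 0"
    using holder_seminorm_nonneg[OF hold, of 0 "axis k 1"] by (simp add: H_def)
  have holder: "norm (gradPhi y1 - gradPhi y2) \<le> H * dist y1 y2 powr \<gamma>" for y1 y2
    using holder_seminorm_bound[OF hold] by (simp add: H_def)
  have "grad_inf gradPhi (frontier D) \<le> c"
    unfolding grad_inf_def c_def by (rule cINF_lower[OF _ xb]) (auto intro: bdd_belowI[of _ 0])
  then have small': "H * \<delta> powr \<gamma> \<le> c / 2"
    using small by (simp add: H_def mult.commute)
  obtain R where R: "orthogonal_transformation R" "det (matrix R) = 1" "R (gradPhi x) = c *\<^sub>R axis k 1"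
    using rotation_exists[OF dim, of "gradPhi x" "c *\<^sub>R axis k 1"] \<open>c > 0\<close> by (auto simp: c_def)
  have "\<gamma> \<ge> 0" "\<gamma> \<le> 1"
    using gam by simp_all
  from graph_near_point[OF deriv holder R(1,3) \<open>c > 0\<close> \<open>H \<ge> 0\<close> this small']
  obtain g U where g: "\<forall>z w. (\<forall>i. i \<noteq> k \<longrightarrow> z $ i = w $ i) \<longrightarrow> g z = g w \<and> (z \<in> U \<longleftrightarrow> w \<in> U)"
      "C1_holder_on g \<gamma> U"
      "\<forall>y\<in>ball x \<delta>. \<Phi> y = 0 \<longleftrightarrow> R (y - x) \<in> U \<and> R (y - x) $ k = g (R (y - x))"
      "\<forall>y\<in>ball x \<delta>. \<Phi> y < 0 \<longleftrightarrow> R (y - x) $ k < g (R (y - x))"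
    by (elim exE conjE)
  have "\<forall>y\<in>ball x \<delta>. y \<in> frontier D \<longleftrightarrow> R (y - x) \<in> U \<and> R (y - x) $ k = g (R (y - x))"
    using g(3) bdry by simp
  moreover have "\<forall>y\<in>ball x \<delta>. y \<in> D \<longleftrightarrow> R (y - x) $ k < g (R (y - x))"
    using g(4) D_def by simp
  ultimately show ?thesis
    using R(1,2) g(1,2) by blast
qed

end
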